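(* Let $\ell$ be an odd prime and $N\ge1$. For integers $k\ge0$ and $0\le v<\ell^N$, $$\sum_{\substack{k'\ge0\\ k'\equiv v\ (\mathrm{mod}\ \ell^N)}}(-1)^{k'}\binom{\ell^N+2k-2}{k'}\equiv\begin{cases} v+1\pmod{\ell} & (k=0)\\ 0\pmod{\ell} & (k>0).\end{cases}$$
   Context: $\binom{m}{k'}=0$ for $k'>m$. *)

theory Defs
  imports "HOL-Number_Theory.Number_Theory"
begin

end

theory Submission
  imports Defs
begin

text \<open>
  Write \<open>q = \<ell>\<^sup>N\<close>. Modulo \<open>\<ell>\<close> all inner binomial coefficients \<open>q choose j\<close> vanish, so
  \<open>(1 + x)\<^sup>q \<equiv> 1 + x\<^sup>q\<close>. Hence \<open>(1 + x)\<^bsup>q+n\<^esup> \<equiv> (1 + x)\<^sup>n + x\<^sup>q (1 + x)\<^sup>n\<close>, and since \<open>q\<close> is odd,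
  the alternating sum of the coefficients in a residue class mod \<open>q\<close> receives the same
  contributions from both summands with opposite signs; this settles \<open>k > 0\<close>.
  For \<open>k = 0\<close> the residue class below \<open>q - 2\<close> contains at most the single index \<open>v\<close>, and
  \<open>(1 + x)\<^bsup>q-1-i\<^esup> \<equiv> (1 + x)\<^bsup>-1-i\<^esup>\<close> modulo \<open>x\<^sup>q\<close> gives
  \<open>(-1)\<^sup>v (q-2 choose v) \<equiv> v + 1\<close>.
\<close>

lemma prime_dvd_prime_power_choose:
  fixes p :: nat
  assumes "prime p" "0 < j" "j < p ^ N"
  shows "p dvd (p ^ N choose j)"
proof (rule ccontr)
  assume "\<not> p dvd (p ^ N choose j)"
  then have "coprime (p ^ N) (p ^ N choose j)"
    using assms(1) by (simp add: prime_imp_coprime)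
  moreover have "p ^ N dvd (p ^ N choose j) * j"
  proof -
    have "Suc (p ^ N - 1) = p ^ N" "Suc (j - 1) = j"
      using assms(2,3) by simp_all
    then show ?thesis
      using Suc_times_binomial_eq[of "p ^ N - 1" "j - 1"] by (metis dvd_triv_left)
  qed
  ultimately have "p ^ N dvd j"
    by (metis coprime_dvd_mult_right_iff)
  with assms(2,3) show False
    by (simp add: nat_dvd_not_less)
qed

lemma choose_prime_power_add_cong:
  fixes p :: nat
  assumes "prime p"
  shows "[(p ^ N + n) choose r
          = (n choose r) + (if p ^ N \<le> r then n choose (r - p ^ N) else 0)] (mod p)"
proof -
  define q where "q = p ^ N"
  have "q > 0"
    using assms by (simp add: q_def prime_gt_0_nat)
  have term_cong: "[(q choose j) * (n choose (r - j))
      = (if j = 0 then n choose r else 0) + (if j = q then n choose (r - q) else 0)] (mod p)" for j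
  proof (cases "j = 0 \<or> j = q")
    case True
    then show ?thesis
      using \<open>q > 0\<close> by auto
  next
    case False
    then have "p dvd (q choose j)"
      using prime_dvd_prime_power_choose[OF assms, of j N]
      by (cases "j < q") (auto simp: q_def binomial_eq_0)
    then show ?thesis
      using False by (simp add: cong_0_iff)
  qed
  have "(q + n) choose r = (\<Sum>j\<le>r. (q choose j) * (n choose (r - j)))"
    by (rule vandermonde[symmetric])
  also have "[\<dots> = (\<Sum>j\<le>r. (if j = 0 then n choose r else 0)
                      + (if j = q then n choose (r - q) else 0))] (mod p)"
    by (rule cong_sum) (rule term_cong)
  also have "(\<Sum>j\<le>r. (if j = 0 then n choose r else 0) + (if j = q then n choose (r - q) else 0))
      = (n choose r) + (if q \<le> r then n choose (r - q) else 0)"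
    by (simp add: sum.distrib)
  finally show ?thesis
    unfolding q_def .
qed

lemma sum_alternating_choose_residue_class_cong_0:
  fixes p :: nat
  assumes "prime p" "odd p"
  shows "[(\<Sum>r \<in> {r. r \<le> p ^ N + n \<and> [r = v] (mod p ^ N)}.
            (-1::int) ^ r * int ((p ^ N + n) choose r)) = 0] (mod int p)"
proof -
  define q where "q = p ^ N"
  define A where "A = {r. r \<le> q + n \<and> [r = v] (mod q)}"
  define B where "B = {s. s \<le> n \<and> [s = v] (mod q)}"
  define g where "g r = (-1::int) ^ r * int (n choose r)" for r
  have "odd q" "q > 0"
    using assms by (simp_all add: q_def prime_gt_0_nat)
  have "finite A"
    by (simp add: A_def)
  have "[(\<Sum>r\<in>A. (-1::int) ^ r * int ((q + n) choose r))
       = (\<Sum>r\<in>A. g r + (if q \<le> r then - g (r - q) else 0))] (mod int p)"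
  proof (rule cong_sum)
    fix r
    have "[int ((q + n) choose r)
        = int (n choose r) + int (if q \<le> r then n choose (r - q) else 0)] (mod int p)"
      using choose_prime_power_add_cong[OF assms(1), of N n r]
      by (simp only: q_def cong_int_iff flip: of_nat_add)
    then have "[(-1::int) ^ r * int ((q + n) choose r)
        = (-1) ^ r * (int (n choose r) + int (if q \<le> r then n choose (r - q) else 0))] (mod int p)"
      by (rule cong_scalar_left)
    moreover have "(-1::int) ^ r = - ((-1) ^ (r - q))" if "q \<le> r"
    proof -
      have "(-1::int) ^ r = (-1) ^ (r - q) * (-1) ^ q"
        using that by (metis le_add_diff_inverse2 power_add)
      then show ?thesis
        using \<open>odd q\<close> by simp
    qed
    ultimately show "[(-1::int) ^ r * int ((q + n) choose r)
        = g r + (if q \<le> r then - g (r - q) else 0)] (mod int p)"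
      by (cases "q \<le> r") (simp_all add: g_def algebra_simps)
  qed
  also have "(\<Sum>r\<in>A. g r + (if q \<le> r then - g (r - q) else 0))
      = (\<Sum>r\<in>A. g r) + (\<Sum>r\<in>{r\<in>A. q \<le> r}. - g (r - q))"
    by (simp add: sum.distrib sum.inter_filter \<open>finite A\<close>)
  also have "(\<Sum>r\<in>A. g r) = (\<Sum>s\<in>B. g s)"
    by (rule sum.mono_neutral_right[OF \<open>finite A\<close>])
       (auto simp: A_def B_def g_def binomial_eq_0)
  also have "(\<Sum>r\<in>{r\<in>A. q \<le> r}. - g (r - q)) = (\<Sum>s\<in>B. - g s)"
    by (rule sum.reindex_bij_witness[of _ "\<lambda>s. s + q" "\<lambda>r. r - q"])
       (auto simp: A_def B_def cong_def le_mod_geq)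
  finally show ?thesis
    by (simp add: A_def q_def sum_negf)
qed

lemma choose_alternating_partial_sum:
  "(\<Sum>j\<le>v. (-1) ^ j * of_nat (Suc n choose j) :: 'a::comm_ring_1) = (-1) ^ v * of_nat (n choose v)"
  by (induction v) (simp_all add: algebra_simps)

text \<open>\<open>(-1)\<^sup>v (i + v choose v)\<close> is the coefficient of \<open>x\<^sup>v\<close> in \<open>(1 + x)\<^bsup>-1-i\<^esup>\<close>: each induction step
  divides by \<open>1 + x\<close>, i.e. takes alternating partial sums, starting from \<open>(1 + x)\<^sup>q \<equiv> 1\<close> modulo \<open>p\<close> and \<open>x\<^sup>q\<close>.\<close>

lemma alternating_choose_prime_power_diff_cong:
  fixes p :: nat
  assumes "prime p" "v + i < p ^ N"
  shows "[(-1) ^ v * int ((p ^ N - Suc i) choose v) = int ((i + v) choose v)] (mod int p)"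
  using assms(2)
proof (induction i arbitrary: v)
  case 0
  define q where "q = p ^ N"
  have "Suc (q - 1) = q"
    using 0 by (simp add: q_def)
  then have "(-1) ^ v * int ((q - 1) choose v) = (\<Sum>j\<le>v. (-1) ^ j * int (q choose j))"
    using choose_alternating_partial_sum[where 'a = int and v = v and n = "q - 1"] by simp
  also have "[\<dots> = (\<Sum>j\<le>v. if j = 0 then 1 else 0)] (mod int p)"
  proof (rule cong_sum)
    fix j
    assume "j \<in> {..v}"
    then have "p dvd (q choose j)" if "j \<noteq> 0"
      using prime_dvd_prime_power_choose[OF assms(1), of j N] that 0 by (simp add: q_def)
    then show "[(-1) ^ j * int (q choose j) = (if j = 0 then 1 else 0)] (mod int p)"
      by (auto simp: cong_0_iff)
  qed
  finally show ?case
    by (simp add: q_def)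
next
  case (Suc i)
  define q where "q = p ^ N"
  have "(-1) ^ v * int ((q - Suc (Suc i)) choose v) = (\<Sum>j\<le>v. (-1) ^ j * int ((q - Suc i) choose j))"
    using choose_alternating_partial_sum[where 'a = int and v = v and n = "q - Suc (Suc i)"] Suc.prems
    by (simp add: q_def Suc_diff_Suc)
  also have "[\<dots> = (\<Sum>j\<le>v. int ((i + j) choose j))] (mod int p)"
    by (rule cong_sum) (use Suc in \<open>simp add: q_def\<close>)
  also have "(\<Sum>j\<le>v. int ((i + j) choose j)) = int ((Suc i + v) choose v)"
    by (simp add: sum_choose_lower flip: of_nat_sum)
  finally show ?case
    by (simp add: q_def)
qed

lemma residue_class_below_modulus:
  fixes q :: nat
  assumes "m < q" "v < q"
  shows "{r. r \<le> m \<and> [r = v] (mod q)} = {v} \<inter> {..m}"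
  using assms by (auto simp: cong_def)

lemma sum_alternating_choose_residue_class_minus_two_cong:
  fixes p :: nat
  assumes "prime p" "N \<ge> 1" "v < p ^ N"
  shows "[(\<Sum>r \<in> {r. r \<le> p ^ N - 2 \<and> [r = v] (mod p ^ N)}.
            (-1::int) ^ r * int ((p ^ N - 2) choose r)) = int v + 1] (mod int p)"
proof -
  define q where "q = p ^ N"
  have "2 \<le> q"
    using prime_ge_2_nat[OF assms(1)] self_le_power[of p N] assms(2) by (simp add: q_def)
  have "{r. r \<le> q - 2 \<and> [r = v] (mod q)} = {v} \<inter> {..q - 2}"
    using residue_class_below_modulus[of "q - 2" q v] assms(3) by (simp add: q_def)
  moreover have "[(\<Sum>r \<in> {v} \<inter> {..q - 2}. (-1::int) ^ r * int ((q - 2) choose r)) = int v + 1] (mod int p)"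
  proof (cases "v \<le> q - 2")
    case True
    then show ?thesis
      using alternating_choose_prime_power_diff_cong[OF assms(1), of v 1 N] \<open>2 \<le> q\<close>
      by (simp add: q_def numeral_2_eq_2 add.commute)
  next
    case False
    then have "v + 1 = q"
      using assms(3) by (simp add: q_def)
    moreover have "p dvd q"
      using assms(2) by (simp add: q_def dvd_power)
    ultimately have "[0 = int v + 1] (mod int p)"
      by (metis cong_0_iff cong_sym of_nat_1 of_nat_add of_nat_dvd_iff)
    then show ?thesis
      using False by simp
  qed
  ultimately show ?thesis
    by (simp add: q_def)
qed

theorem mainTheorem12:
  fixes l N k v :: nat
  assumes "prime l" and "odd l" and "N \<ge> 1" and "v < l ^ N"
  shows "[(\<Sum>k' \<in> {k'. k' \<le> l ^ N + 2 * k - 2 \<and> [k' = v] (mod l ^ N)}.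
             (-1::int) ^ k' * int ((l ^ N + 2 * k - 2) choose k'))
          = (if k = 0 then int v + 1 else 0)] (mod int l)"
proof (cases "k = 0")
  case True
  then show ?thesis
    using sum_alternating_choose_residue_class_minus_two_cong[OF assms(1,3,4)] by simp
next
  case False
  then have "l ^ N + 2 * k - 2 = l ^ N + (2 * k - 2)"
    by simp
  then show ?thesis
    using sum_alternating_choose_residue_class_cong_0[OF assms(1,2), of N "2 * k - 2" v] False
    by simp
qed

end
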